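(* Let $(a_n)_{n\ge1}$ be a sequence of positive integers with $a_1=1$ such that $\alpha_n:=\#\{i:a_i=n\}<\infty$ for all $n$. Let $(X_n)_{n\ge1}$ be independent random variables with $\mathbb{P}(X_n=a_n)=\tfrac12=\mathbb{P}(X_n=0)$. Then, with $L$ ranging over positive integers: (1) if $\limsup_{n\to\infty}\alpha_n^{1/n}=\infty$, then $\liminf_{L\to\infty}\lim_{n\to\infty}\mathbb{P}(X_1=1\mid X_1+\dots+X_n\le L)=0$; (2) if $\limsup_{n\to\infty}\alpha_n^{1/n}<\infty$, then $\limsup_{L\to\infty}\lim_{n\to\infty}\mathbb{P}(X_1=1\mid X_1+\dots+X_n\le L)>0$. *)

theory Defs
  imports "HOL-Probability.Probability"
begin

definition alpha :: "(nat \<Rightarrow> nat) \<Rightarrow> nat \<Rightarrow> nat" where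
  "alpha a n = card {i. 1 \<le> i \<and> a i = n}"

end

theory Submission
  imports Defs
begin

(* Almost surely each X_i is 0 or a_i, so X_1 + ... + X_n is the weight sum a(T) of the random
   set T = {i <= n. X_i /= 0}, which is uniformly distributed over the subsets of {1..n}. Once every
   index of weight at most L is at most n, conditioning on X_1 + ... + X_n <= L makes T uniform over
   the finitely many light sets (index sets of total weight at most L), and X_1 = 1 means 1 in T.
   Writing G(L) for the number of light sets avoiding 1, removing 1 from the others shows that the
   conditional probability equals G(L-1) / (G(L) + G(L-1)).

   If this ratio stayed above some eps > 0, G would grow at most geometrically, and so would
   alpha_L <= G(L) (the singletons {i} with a_i = L are light sets avoiding 1). Conversely, if
   alpha_n <= C^n, Rankin's trick bounds the number of light sets by e^2 (2C)^L, so G cannot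
   eventually grow by the factor 4C at each step, as a ratio tending to 0 would force. *)

lemma geometric_growth_upper:
  fixes f :: "nat \<Rightarrow> real"
  assumes grow: "\<And>n. N \<le> n \<Longrightarrow> f (Suc n) \<le> K * f n" and "0 \<le> K" and "N \<le> n"
  shows "f n \<le> K ^ (n - N) * f N"
  using \<open>N \<le> n\<close>
proof (induction n rule: dec_induct)
  case (step n)
  have "f (Suc n) \<le> K * f n" using step.hyps(1) by (rule grow)
  also have "\<dots> \<le> K * (K ^ (n - N) * f N)" using step.IH \<open>0 \<le> K\<close> by (rule mult_left_mono)
  finally show ?case using step.hyps by (simp add: Suc_diff_le)
qed simp

lemma geometric_growth_lower:
  fixes f :: "nat \<Rightarrow> real"
  assumes "\<And>n. N \<le> n \<Longrightarrow> K * f n \<le> f (Suc n)" and "0 \<le> K" and "N \<le> n"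
  shows "K ^ (n - N) * f N \<le> f n"
  using geometric_growth_upper[of N "\<lambda>n. - f n" K n] assms by simp

lemma limsup_root_finite_if_geometric_bound:
  fixes f :: "nat \<Rightarrow> real"
  assumes "eventually (\<lambda>n. f n \<le> P * K ^ n) sequentially" and "1 \<le> P" and "0 \<le> K"
  shows "limsup (\<lambda>n. ereal (root n (f n))) < \<infinity>"
proof -
  have "eventually (\<lambda>n. root n (f n) \<le> P * K) sequentially"
    using assms(1) eventually_gt_at_top[of 0]
  proof eventually_elim
    case (elim n)
    have "P * K ^ n \<le> P ^ n * K ^ n"
      using \<open>1 \<le> P\<close> \<open>0 < n\<close> \<open>0 \<le> K\<close> by (intro mult_right_mono) (simp_all add: self_le_power)
    with elim have "f n \<le> (P * K) ^ n" by (simp add: power_mult_distrib)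
    then have "root n (f n) \<le> root n ((P * K) ^ n)" using \<open>0 < n\<close> by (rule real_root_le_mono[rotated])
    also have "\<dots> = P * K" using \<open>0 < n\<close> \<open>1 \<le> P\<close> \<open>0 \<le> K\<close> by (simp add: real_root_power_cancel)
    finally show ?case .
  qed
  then have "limsup (\<lambda>n. ereal (root n (f n))) \<le> ereal (P * K)"
    by (intro Limsup_bounded) (simp add: eventually_mono)
  then show ?thesis by (rule order.strict_trans1) simp
qed

lemma power_bound_if_limsup_root_finite:
  fixes f :: "nat \<Rightarrow> real"
  assumes "limsup (\<lambda>n. ereal (root n (f n))) < \<infinity>" and "\<And>n. 0 \<le> f n"
  obtains C where "1 \<le> C" and "\<And>n. 0 < n \<Longrightarrow> f n \<le> C ^ n"
proof -
  obtain B where B: "\<And>n. root n (f n) \<le> B"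
    using limsup_finite_then_bounded[OF assms(1)] by blast
  have "f n \<le> max B 1 ^ n" if "0 < n" for n
  proof -
    have "f n = root n (f n) ^ n" using \<open>0 < n\<close> assms(2) by simp
    also have "\<dots> \<le> max B 1 ^ n"
      using B[of n] \<open>0 < n\<close> assms(2) by (intro power_mono) auto
    finally show ?thesis .
  qed
  then show ?thesis using that[of "max B 1"] by simp
qed

definition light_indices :: "(nat \<Rightarrow> nat) \<Rightarrow> nat \<Rightarrow> nat set" where
  "light_indices a L = {i. 1 \<le> i \<and> a i \<le> L}"

text \<open>For large n, on the event \<open>X 1 + ... + X n \<le> L\<close> the set \<open>{i \<in> {1..n}. X i \<noteq> 0}\<close> is almost
  surely a light set, all light sets being equally likely; so \<open>ratio_with_one a L\<close> is the limiting
  conditional probability of \<open>X 1 = 1\<close>.\<close>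
definition light_sets :: "(nat \<Rightarrow> nat) \<Rightarrow> nat \<Rightarrow> nat set set" where
  "light_sets a L = {T. T \<subseteq> light_indices a L \<and> sum a T \<le> L}"

definition count_avoiding_one :: "(nat \<Rightarrow> nat) \<Rightarrow> nat \<Rightarrow> nat" where
  "count_avoiding_one a L = card {T \<in> light_sets a L. 1 \<notin> T}"

definition ratio_with_one :: "(nat \<Rightarrow> nat) \<Rightarrow> nat \<Rightarrow> real" where
  "ratio_with_one a L = card {T \<in> light_sets a L. 1 \<in> T} / card (light_sets a L)"

locale weight_sequence =
  fixes a :: "nat \<Rightarrow> nat"
  assumes weight_one: "a 1 = 1"
    and weight_pos: "\<And>n. 1 \<le> n \<Longrightarrow> 0 < a n"
    and finite_fibres: "\<And>n. finite {i. 1 \<le> i \<and> a i = n}"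
begin

lemma finite_light_indices: "finite (light_indices a L)"
proof -
  have "light_indices a L = (\<Union>n\<le>L. {i. 1 \<le> i \<and> a i = n})"
    by (auto simp: light_indices_def)
  then show ?thesis using finite_fibres by simp
qed

lemma finite_light_sets: "finite (light_sets a L)"
  by (rule finite_subset[of _ "Pow (light_indices a L)"])
     (auto simp: light_sets_def finite_light_indices)

lemma finite_mem_light_sets: "T \<in> light_sets a L \<Longrightarrow> finite T"
  using finite_light_indices by (auto simp: light_sets_def intro: finite_subset)

lemma light_sets_eq:
  assumes "light_indices a L \<subseteq> J" and "J \<subseteq> {1..}" and "finite J"
  shows "{T. T \<subseteq> J \<and> sum a T \<le> L} = light_sets a L"
proof (intro equalityI subsetI; clarsimp)
  fix T assume T: "T \<subseteq> J" "sum a T \<le> L"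
  have "a i \<le> L" if "i \<in> T" for i
    using member_le_sum[of i T a] that T \<open>finite J\<close> finite_subset by fastforce
  then show "T \<in> light_sets a L"
    using T \<open>J \<subseteq> {1..}\<close> by (auto simp: light_sets_def light_indices_def)
qed (use assms in \<open>auto simp: light_sets_def\<close>)

lemma card_light_sets:
  "card (light_sets a L) = count_avoiding_one a L + card {T \<in> light_sets a L. 1 \<in> T}"
  unfolding count_avoiding_one_def
  by (subst card_Un_disjoint[symmetric])
     (auto intro: finite_subset[OF _ finite_light_sets] arg_cong[where f = card])

lemma count_avoiding_one_pos: "0 < count_avoiding_one a L"
proof -
  have "{} \<in> {T \<in> light_sets a L. 1 \<notin> T}" by (simp add: light_sets_def)
  then show ?thesis unfolding count_avoiding_one_def
    by (subst card_gt_0_iff) (auto intro: finite_subset[OF _ finite_light_sets])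
qed

lemma card_light_sets_with_one:
  assumes "1 \<le> L"
  shows "card {T \<in> light_sets a L. 1 \<in> T} = count_avoiding_one a (L - 1)"
  unfolding count_avoiding_one_def
proof (rule bij_betw_same_card[of "\<lambda>T. T - {1}"], rule bij_betw_byWitness[where f' = "insert 1"])
  show "(\<lambda>T. T - {1}) ` {T \<in> light_sets a L. 1 \<in> T} \<subseteq> {T \<in> light_sets a (L - 1). 1 \<notin> T}"
  proof safe
    fix T assume T: "T \<in> light_sets a L" "1 \<in> T"
    have "sum a T = 1 + sum a (T - {1})"
      using sum.remove[OF finite_mem_light_sets[OF T(1)] T(2), of a] weight_one by simp
    moreover have "a i \<le> sum a (T - {1})" if "i \<in> T - {1}" for i
      using member_le_sum[of i "T - {1}" a] that finite_mem_light_sets[OF T(1)] by simp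
    ultimately show "T - {1} \<in> light_sets a (L - 1)"
      using T(1) by (fastforce simp: light_sets_def light_indices_def)
  qed
  show "insert 1 ` {T \<in> light_sets a (L - 1). 1 \<notin> T} \<subseteq> {T \<in> light_sets a L. 1 \<in> T}"
    using assms weight_one finite_mem_light_sets
    by (auto simp: light_sets_def light_indices_def)
qed auto

lemma ratio_with_one_eq:
  assumes "1 \<le> L"
  shows "ratio_with_one a L =
    count_avoiding_one a (L - 1) / (count_avoiding_one a L + count_avoiding_one a (L - 1))"
  unfolding ratio_with_one_def card_light_sets card_light_sets_with_one[OF assms] by simp

lemma count_avoiding_one_Suc_le_if_ratio_gt:
  assumes "0 < \<epsilon>" and "\<epsilon> < ratio_with_one a (Suc L)"
  shows "count_avoiding_one a (Suc L) \<le> 1 / \<epsilon> * count_avoiding_one a L"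
proof -
  have "\<epsilon> * (count_avoiding_one a (Suc L) + count_avoiding_one a L) < count_avoiding_one a L"
    using assms(2) count_avoiding_one_pos[of "Suc L"]
    by (simp add: ratio_with_one_eq less_divide_eq mult.commute)
  moreover have "0 \<le> \<epsilon> * count_avoiding_one a L"
    using \<open>0 < \<epsilon>\<close> by simp
  ultimately have "\<epsilon> * count_avoiding_one a (Suc L) \<le> count_avoiding_one a L"
    unfolding of_nat_add distrib_left by linarith
  then show ?thesis
    using \<open>0 < \<epsilon>\<close> by (simp add: field_simps mult.commute)
qed

lemma count_avoiding_one_Suc_gt_if_ratio_lt:
  assumes "0 \<le> c" and "ratio_with_one a (Suc L) < 1 / (c + 1)"
  shows "c * count_avoiding_one a L < count_avoiding_one a (Suc L)"
  using assms count_avoiding_one_pos[of "Suc L"]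
  by (simp add: ratio_with_one_eq field_simps)

lemma alpha_le_count_avoiding_one:
  assumes "2 \<le> L"
  shows "alpha a L \<le> count_avoiding_one a L"
  unfolding alpha_def count_avoiding_one_def
proof (rule card_inj_on_le[of "\<lambda>i. {i}"])
  show "(\<lambda>i. {i}) ` {i. 1 \<le> i \<and> a i = L} \<subseteq> {T \<in> light_sets a L. 1 \<notin> T}"
    using assms weight_one by (auto simp: light_sets_def light_indices_def)
qed (auto intro: finite_subset[OF _ finite_light_sets])

lemma alpha_zero: "alpha a 0 = 0"
proof -
  have "{i. 1 \<le> i \<and> a i = 0} = {}" using weight_pos by fastforce
  then show ?thesis unfolding alpha_def by (simp only: card.empty)
qed

lemma sum_light_indices_power:
  fixes x :: real
  shows "(\<Sum>i\<in>light_indices a L. x ^ a i) = (\<Sum>n\<le>L. alpha a n * x ^ n)"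
proof -
  have "(\<Sum>i\<in>light_indices a L. x ^ a i) =
      (\<Sum>n\<le>L. \<Sum>i\<in>{i \<in> light_indices a L. a i = n}. x ^ a i)"
    by (rule sum.group[symmetric]) (use finite_light_indices in \<open>auto simp: light_indices_def\<close>)
  also have "\<dots> = (\<Sum>n\<le>L. alpha a n * x ^ n)"
  proof (rule sum.cong[OF refl])
    fix n assume "n \<in> {..L}"
    then have "{i \<in> light_indices a L. a i = n} = {i. 1 \<le> i \<and> a i = n}"
      by (auto simp: light_indices_def)
    then show "(\<Sum>i\<in>{i \<in> light_indices a L. a i = n}. x ^ a i) = alpha a n * x ^ n"
      by (simp add: alpha_def)
  qed
  finally show ?thesis .
qed

text \<open>Rankin's trick: every light set T satisfies \<open>x ^ L \<le> x ^ sum a T\<close>, and the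
  sum of \<open>x ^ sum a T\<close> over all subsets of the light indices factorises.\<close>
lemma card_light_sets_mult_power_le:
  fixes x :: real
  assumes "0 < x" and "x \<le> 1"
  shows "card (light_sets a L) * x ^ L \<le> exp (\<Sum>i\<in>light_indices a L. x ^ a i)"
proof -
  let ?I = "light_indices a L"
  have "card (light_sets a L) * x ^ L = (\<Sum>T\<in>light_sets a L. x ^ L)" by simp
  also have "\<dots> \<le> (\<Sum>T\<in>light_sets a L. x ^ sum a T)"
    using assms by (intro sum_mono power_decreasing) (auto simp: light_sets_def)
  also have "\<dots> \<le> (\<Sum>T\<in>Pow ?I. x ^ sum a T)"
    using assms finite_light_indices by (intro sum_mono2) (auto simp: light_sets_def)
  also have "\<dots> = (\<Sum>T\<in>Pow ?I. (\<Prod>i\<in>T. x ^ a i) * (\<Prod>i\<in>?I - T. 1))"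
    by (simp add: power_sum)
  also have "\<dots> = (\<Prod>i\<in>?I. x ^ a i + 1)"
    by (rule prod_add[symmetric]) (rule finite_light_indices)
  also have "\<dots> \<le> (\<Prod>i\<in>?I. exp (x ^ a i))"
    using assms by (intro prod_mono) (auto simp: add.commute[of _ 1] exp_ge_add_one_self)
  also have "\<dots> = exp (\<Sum>i\<in>?I. x ^ a i)"
    by (simp add: exp_sum finite_light_indices)
  finally show ?thesis .
qed

lemma card_light_sets_le:
  fixes C :: real
  assumes "1 \<le> C" and alpha_le: "\<And>n. alpha a n \<le> C ^ n"
  shows "card (light_sets a L) \<le> exp 2 * (2 * C) ^ L"
proof -
  define x where "x = 1 / (2 * C)"
  have x: "0 < x" "x \<le> 1" using \<open>1 \<le> C\<close> by (auto simp: x_def)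
  have "(\<Sum>n\<le>L. alpha a n * x ^ n) \<le> (\<Sum>n\<le>L. C ^ n * x ^ n)"
    using x alpha_le by (intro sum_mono mult_right_mono) auto
  also have "\<dots> = (\<Sum>n<Suc L. (1 / 2) ^ n)"
    using \<open>1 \<le> C\<close> by (simp add: x_def lessThan_Suc_atMost flip: power_mult_distrib)
  also have "\<dots> \<le> 2"
    by (simp add: geometric_sum)
  finally have "exp (\<Sum>i\<in>light_indices a L. x ^ a i) \<le> exp 2"
    by (simp add: sum_light_indices_power)
  with card_light_sets_mult_power_le[OF x] have "card (light_sets a L) * x ^ L \<le> exp 2"
    by (rule order_trans)
  then show ?thesis
    using x \<open>1 \<le> C\<close> by (simp add: x_def field_simps)
qed

lemma limsup_root_alpha_finite_if_count_avoiding_one_Suc_le: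
  fixes K :: real
  assumes "1 \<le> K"
    and grow: "\<And>L. N \<le> L \<Longrightarrow> count_avoiding_one a (Suc L) \<le> K * count_avoiding_one a L"
  shows "limsup (\<lambda>n. ereal (root n (alpha a n))) < \<infinity>"
proof (rule limsup_root_finite_if_geometric_bound)
  show "eventually (\<lambda>n. alpha a n \<le> count_avoiding_one a N * K ^ n) sequentially"
    using eventually_ge_at_top[of "max N 2"]
  proof eventually_elim
    case (elim n)
    have "alpha a n \<le> real (count_avoiding_one a n)"
      using alpha_le_count_avoiding_one elim by simp
    also have "\<dots> \<le> K ^ (n - N) * count_avoiding_one a N"
      using grow elim \<open>1 \<le> K\<close>
      by (intro geometric_growth_upper[where f = "\<lambda>L. count_avoiding_one a L"]) auto
    also have "\<dots> \<le> K ^ n * count_avoiding_one a N"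
      using \<open>1 \<le> K\<close> by (intro mult_right_mono power_increasing) auto
    finally show ?case by (simp add: mult.commute)
  qed
  show "1 \<le> real (count_avoiding_one a N)"
    using count_avoiding_one_pos[of N] by simp
qed (use \<open>1 \<le> K\<close> in simp)

lemma count_avoiding_one_frequently_Suc_less:
  fixes C :: real
  assumes "1 \<le> C" and alpha_le: "\<And>n. alpha a n \<le> C ^ n"
  shows "\<exists>L \<ge> N. count_avoiding_one a (Suc L) < 4 * C * count_avoiding_one a L"
proof (rule ccontr)
  assume "\<not> ?thesis"
  then have grow: "\<And>L. N \<le> L \<Longrightarrow> 4 * C * count_avoiding_one a L \<le> count_avoiding_one a (Suc L)"
    by (meson not_less)
  have "2 ^ d \<le> exp 2 * (2 * C) ^ N" for d
  proof -
    have "2 ^ d * (2 * C) ^ d = (4 * C) ^ d"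
      unfolding power_mult_distrib[symmetric] by simp
    also have "\<dots> \<le> (4 * C) ^ (N + d - N) * count_avoiding_one a N"
      using count_avoiding_one_pos[of N] \<open>1 \<le> C\<close> by simp
    also have "\<dots> \<le> count_avoiding_one a (N + d)"
      using grow \<open>1 \<le> C\<close> by (intro geometric_growth_lower[where f = "\<lambda>L. count_avoiding_one a L"]) auto
    also have "\<dots> \<le> card (light_sets a (N + d))"
      using card_light_sets by simp
    also have "\<dots> \<le> exp 2 * (2 * C) ^ N * (2 * C) ^ d"
      using card_light_sets_le[OF \<open>1 \<le> C\<close> alpha_le, of "N + d"] by (simp only: power_add mult.assoc)
    finally show ?thesis
      by (rule mult_right_le_imp_le) (use \<open>1 \<le> C\<close> in simp)
  qed
  moreover obtain d where "exp 2 * (2 * C) ^ N < 2 ^ d"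
    using real_arch_pow[of 2] by auto
  ultimately show False
    using not_le by blast
qed

theorem liminf_ratio_with_one_eq_0:
  assumes "limsup (\<lambda>n. ereal (root n (alpha a n))) = \<infinity>"
  shows "liminf (\<lambda>L. ereal (ratio_with_one a L)) = 0"
proof (rule antisym)
  show "0 \<le> liminf (\<lambda>L. ereal (ratio_with_one a L))"
    by (rule Liminf_bounded) (simp add: ratio_with_one_def)
  show "liminf (\<lambda>L. ereal (ratio_with_one a L)) \<le> 0"
  proof (rule ccontr)
    assume "\<not> ?thesis"
    then obtain \<epsilon> where "0 < \<epsilon>" and \<epsilon>: "ereal \<epsilon> < liminf (\<lambda>L. ereal (ratio_with_one a L))"
      by (metis ereal_dense2 ereal_less(2) not_le)
    define K where "K = max 1 (1 / \<epsilon>)"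
    have "eventually (\<lambda>L. count_avoiding_one a (Suc L) \<le> K * count_avoiding_one a L) sequentially"
      using less_LiminfD[OF \<epsilon>, THEN eventually_sequentially_Suc[THEN iffD2]]
    proof eventually_elim
      case (elim L)
      then have "count_avoiding_one a (Suc L) \<le> 1 / \<epsilon> * count_avoiding_one a L"
        using count_avoiding_one_Suc_le_if_ratio_gt \<open>0 < \<epsilon>\<close> by simp
      also have "\<dots> \<le> K * count_avoiding_one a L"
        by (intro mult_right_mono) (simp_all add: K_def)
      finally show ?case .
    qed
    then obtain N where "\<And>L. N \<le> L \<Longrightarrow> count_avoiding_one a (Suc L) \<le> K * count_avoiding_one a L"
      by (auto simp: eventually_sequentially)
    with limsup_root_alpha_finite_if_count_avoiding_one_Suc_le[of K N]
    have "limsup (\<lambda>n. ereal (root n (alpha a n))) < \<infinity>"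
      by (simp add: K_def)
    with assms show False by simp
  qed
qed

theorem limsup_ratio_with_one_pos:
  assumes "limsup (\<lambda>n. ereal (root n (alpha a n))) < \<infinity>"
  shows "0 < limsup (\<lambda>L. ereal (ratio_with_one a L))"
proof (rule ccontr)
  assume "\<not> ?thesis"
  obtain C :: real where "1 \<le> C" and "\<And>n. 0 < n \<Longrightarrow> alpha a n \<le> C ^ n"
    using power_bound_if_limsup_root_finite[OF assms of_nat_0_le_iff] by blast
  then have alpha_le: "alpha a n \<le> C ^ n" for n
    by (cases "n = 0") (simp_all add: alpha_zero)
  from \<open>\<not> ?thesis\<close> have "limsup (\<lambda>L. ereal (ratio_with_one a L)) < ereal (1 / (4 * C + 1))"
    by (rule order.strict_trans1[OF leI]) (use \<open>1 \<le> C\<close> in simp)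
  from Limsup_lessD[OF this]
  have "eventually (\<lambda>L. ratio_with_one a (Suc L) < 1 / (4 * C + 1)) sequentially"
    by (intro eventually_sequentially_Suc[THEN iffD2]) simp
  then obtain N where "\<And>L. N \<le> L \<Longrightarrow> 4 * C * count_avoiding_one a L < count_avoiding_one a (Suc L)"
    using count_avoiding_one_Suc_gt_if_ratio_lt[of "4 * C"] \<open>1 \<le> C\<close>
    by (fastforce simp: eventually_sequentially)
  with count_avoiding_one_frequently_Suc_less[OF \<open>1 \<le> C\<close> alpha_le, of N] show False
    by (meson not_le order_less_imp_le)
qed

end

lemma nonzero_indices_eq_iff:
  "T \<subseteq> J \<Longrightarrow> {i \<in> J. f i \<noteq> 0} = T \<longleftrightarrow> (\<forall>i \<in> J. (f i \<noteq> 0) = (i \<in> T))"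
  by auto

context prob_space
begin

lemma nonzero_indices_decompose:
  "{\<omega> \<in> space M. P {i \<in> J. X i \<omega> \<noteq> 0}} =
    (\<Union>T \<in> {T. T \<subseteq> J \<and> P T}. {\<omega> \<in> space M. \<forall>i \<in> J. (X i \<omega> \<noteq> 0) = (i \<in> T)})"
  by (auto simp flip: nonzero_indices_eq_iff)

lemma events_nonzero_indices:
  fixes X :: "'i \<Rightarrow> 'a \<Rightarrow> 'b::zero"
  assumes "\<And>i. i \<in> J \<Longrightarrow> random_variable (count_space UNIV) (X i)" and "finite J"
  shows "{\<omega> \<in> space M. P {i \<in> J. X i \<omega> \<noteq> 0}} \<in> events"
  unfolding nonzero_indices_decompose
  using assms by (intro sets.finite_UN) (auto simp: finite_subset[OF _ finite_Collect_subsets])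

lemma prob_nonzero_indices:
  fixes X :: "'i \<Rightarrow> 'a \<Rightarrow> 'b::zero"
  assumes indep: "indep_vars (\<lambda>_. count_space UNIV) X J" and "finite J"
    and half: "\<And>i. i \<in> J \<Longrightarrow> prob {\<omega> \<in> space M. X i \<omega> = 0} = 1 / 2"
  shows "prob {\<omega> \<in> space M. P {i \<in> J. X i \<omega> \<noteq> 0}} = card {T. T \<subseteq> J \<and> P T} / 2 ^ card J"
proof -
  have rv: "random_variable (count_space UNIV) (X i)" if "i \<in> J" for i
    using indep that by (simp add: indep_vars_def)
  let ?E = "\<lambda>T. {\<omega> \<in> space M. \<forall>i \<in> J. (X i \<omega> \<noteq> 0) = (i \<in> T)}"
  have prob_E: "prob (?E T) = 1 / 2 ^ card J" for T
  proof (cases "J = {}")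
    case False
    let ?A = "\<lambda>i. if i \<in> T then - {0} else {0}"
    have "prob (?E T) = prob (\<Inter>i \<in> J. X i -` ?A i \<inter> space M)"
      using False by (intro arg_cong[where f = prob]) (auto split: if_splits)
    also have "\<dots> = (\<Prod>i \<in> J. prob (X i -` ?A i \<inter> space M))"
      using False \<open>finite J\<close> by (intro indep_varsD_finite[OF indep]) auto
    also have "\<dots> = (\<Prod>i \<in> J. 1 / 2)"
    proof (rule prod.cong[OF refl])
      fix i assume "i \<in> J"
      have "X i -` {0} \<inter> space M = {\<omega> \<in> space M. X i \<omega> = 0}" by auto
      moreover have "X i -` (- {0}) \<inter> space M = space M - {\<omega> \<in> space M. X i \<omega> = 0}" by auto
      moreover have "{\<omega> \<in> space M. X i \<omega> = 0} \<in> events"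
        using rv[OF \<open>i \<in> J\<close>] by measurable
      ultimately show "prob (X i -` ?A i \<inter> space M) = 1 / 2"
        using half[OF \<open>i \<in> J\<close>] by (simp add: prob_compl)
    qed
    finally show ?thesis by (simp add: power_one_over)
  qed (simp add: prob_space)
  have "prob (\<Union>T \<in> {T. T \<subseteq> J \<and> P T}. ?E T) = (\<Sum>T \<in> {T. T \<subseteq> J \<and> P T}. prob (?E T))"
    using rv \<open>finite J\<close>
    by (intro finite_measure_finite_Union)
       (auto simp: disjoint_family_on_def finite_subset[OF _ finite_Collect_subsets])
  then show ?thesis
    by (simp add: nonzero_indices_decompose prob_E)
qed

end

locale half_weight_process = prob_space M + weight_sequence a
  for M :: "'w measure" and a +
  fixes X :: "nat \<Rightarrow> 'w \<Rightarrow> nat"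
  assumes indep: "indep_vars (\<lambda>_. count_space UNIV) X {1..}"
    and prob_weight: "\<And>n. 1 \<le> n \<Longrightarrow> prob {\<omega> \<in> space M. X n \<omega> = a n} = 1 / 2"
    and prob_zero: "\<And>n. 1 \<le> n \<Longrightarrow> prob {\<omega> \<in> space M. X n \<omega> = 0} = 1 / 2"
begin

lemma random_variable_X: "1 \<le> n \<Longrightarrow> random_variable (count_space UNIV) (X n)"
  using indep by (simp add: indep_vars_def)

lemma AE_zero_or_weight:
  assumes "1 \<le> n"
  shows "AE \<omega> in M. X n \<omega> = 0 \<or> X n \<omega> = a n"
proof -
  have "prob ({\<omega> \<in> space M. X n \<omega> = 0} \<union> {\<omega> \<in> space M. X n \<omega> = a n}) = 1 / 2 + 1 / 2"
    using assms weight_pos[OF assms] random_variable_X[OF assms]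
    by (subst finite_measure_Union) (auto simp: prob_weight prob_zero)
  then show ?thesis
    using AE_prob_1 by fastforce
qed

lemma AE_sum_eq_weight_of_nonzero_indices:
  "AE \<omega> in M. (\<Sum>i = 1..n. X i \<omega>) = sum a {i \<in> {1..n}. X i \<omega> \<noteq> 0}"
proof -
  have "AE \<omega> in M. \<forall>i \<in> {1..n}. X i \<omega> = 0 \<or> X i \<omega> = a i"
    using AE_zero_or_weight by (intro eventually_ball_finite) auto
  then show ?thesis
  proof eventually_elim
    case (elim \<omega>)
    then have "(\<Sum>i = 1..n. X i \<omega>) = (\<Sum>i \<in> {1..n}. if X i \<omega> \<noteq> 0 then a i else 0)"
      by (intro sum.cong) force+
    also have "\<dots> = sum a {i \<in> {1..n}. X i \<omega> \<noteq> 0}"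
      by (rule sum.inter_filter[symmetric]) simp
    finally show ?case .
  qed
qed

lemma cond_prob_first_given_sum_le_eq_nonzero_indices:
  assumes "1 \<le> n"
  shows "\<P>(\<omega> in M. X 1 \<omega> = 1 \<bar> (\<Sum>i = 1..n. X i \<omega>) \<le> L) =
    \<P>(\<omega> in M. 1 \<in> {i \<in> {1..n}. X i \<omega> \<noteq> 0} \<bar> sum a {i \<in> {1..n}. X i \<omega> \<noteq> 0} \<le> L)"
    (is "_ = \<P>(\<omega> in M. 1 \<in> ?Z \<omega> \<bar> sum a (?Z \<omega>) \<le> L)")
proof (rule cond_prob_eq_AE)
  have rv: "\<And>i. i \<in> {1..n} \<Longrightarrow> random_variable (count_space UNIV) (X i)"
    using random_variable_X by simp
  show "AE \<omega> in M. (\<Sum>i = 1..n. X i \<omega>) \<le> L \<longrightarrow> X 1 \<omega> = 1 \<longleftrightarrow> 1 \<in> ?Z \<omega>"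
    using AE_zero_or_weight[OF order_refl] by eventually_elim (use assms weight_one in auto)
  show "AE \<omega> in M. (\<Sum>i = 1..n. X i \<omega>) \<le> L \<longleftrightarrow> sum a (?Z \<omega>) \<le> L"
    using AE_sum_eq_weight_of_nonzero_indices[of n] by eventually_elim simp
  show "{\<omega> \<in> space M. X 1 \<omega> = 1} \<in> events"
    using random_variable_X[OF order_refl] by measurable
  show "{\<omega> \<in> space M. (\<Sum>i = 1..n. X i \<omega>) \<le> L} \<in> events"
    using rv by measurable
  show "{\<omega> \<in> space M. 1 \<in> ?Z \<omega>} \<in> events"
    by (rule events_nonzero_indices[where P = "\<lambda>T. 1 \<in> T"]) (simp_all add: rv)
  show "{\<omega> \<in> space M. sum a (?Z \<omega>) \<le> L} \<in> events"
    by (rule events_nonzero_indices[where P = "\<lambda>T. sum a T \<le> L"]) (simp_all add: rv)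
qed

lemma cond_prob_first_given_sum_le:
  assumes "1 \<le> n"
  shows "\<P>(\<omega> in M. X 1 \<omega> = 1 \<bar> (\<Sum>i = 1..n. X i \<omega>) \<le> L) =
    card {T. T \<subseteq> {1..n} \<and> 1 \<in> T \<and> sum a T \<le> L} / card {T. T \<subseteq> {1..n} \<and> sum a T \<le> L}"
proof -
  have indep_n: "indep_vars (\<lambda>_. count_space UNIV) X {1..n}"
    by (rule indep_vars_subset[OF indep]) auto
  have half: "prob {\<omega> \<in> space M. X i \<omega> = 0} = 1 / 2" if "i \<in> {1..n}" for i
    using that by (simp add: prob_zero)
  show ?thesis
    unfolding cond_prob_first_given_sum_le_eq_nonzero_indices[OF assms]
    using prob_nonzero_indices[OF indep_n _ half, where P = "\<lambda>T. 1 \<in> T \<and> sum a T \<le> L"]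
      prob_nonzero_indices[OF indep_n _ half, where P = "\<lambda>T. sum a T \<le> L"]
    by (simp add: cond_prob_def)
qed

lemma lim_cond_prob_first_given_sum_le:
  "lim (\<lambda>n. \<P>(\<omega> in M. X 1 \<omega> = 1 \<bar> (\<Sum>i = 1..n. X i \<omega>) \<le> L)) = ratio_with_one a L"
proof (intro limI tendsto_eventually)
  obtain m where m: "light_indices a L \<subseteq> {..<m}"
    using finite_nat_bounded[OF finite_light_indices] by blast
  show "eventually (\<lambda>n. \<P>(\<omega> in M. X 1 \<omega> = 1 \<bar> (\<Sum>i = 1..n. X i \<omega>) \<le> L) = ratio_with_one a L)
      sequentially"
    using eventually_ge_at_top[of "max m 1"]
  proof eventually_elim
    case (elim n)
    then have "light_indices a L \<subseteq> {1..n}"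
      using m by (force simp: light_indices_def)
    then have light: "{T. T \<subseteq> {1..n} \<and> sum a T \<le> L} = light_sets a L"
      by (intro light_sets_eq) auto
    then have "{T. T \<subseteq> {1..n} \<and> 1 \<in> T \<and> sum a T \<le> L} = {T \<in> light_sets a L. 1 \<in> T}"
      by blast
    with light show ?case
      using elim cond_prob_first_given_sum_le[of n L] by (simp add: ratio_with_one_def)
  qed
qed

end

theorem theoremA3:
  fixes M :: "'w measure" and a :: "nat \<Rightarrow> nat" and X :: "nat \<Rightarrow> 'w \<Rightarrow> nat"
  assumes "prob_space M"
    and "a 1 = 1"
    and "\<And>n. 1 \<le> n \<Longrightarrow> 0 < a n"
    and "\<And>n. finite {i. 1 \<le> i \<and> a i = n}"
    and "\<And>n. 1 \<le> n \<Longrightarrow> X n \<in> measurable M (count_space UNIV)"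
    and "prob_space.indep_vars M (\<lambda>_. count_space UNIV) X {1..}"
    and "\<And>n. 1 \<le> n \<Longrightarrow> \<P>(\<omega> in M. X n \<omega> = a n) = 1/2"
    and "\<And>n. 1 \<le> n \<Longrightarrow> \<P>(\<omega> in M. X n \<omega> = 0) = 1/2"
  shows "(limsup (\<lambda>n. ereal (root n (real (alpha a n)))) = \<infinity> \<longrightarrow>
            liminf (\<lambda>L::nat. ereal (lim (\<lambda>n.
               \<P>(\<omega> in M. X 1 \<omega> = 1 \<bar> (\<Sum>i=1..n. X i \<omega>) \<le> L)))) = 0)
       \<and> (limsup (\<lambda>n. ereal (root n (real (alpha a n)))) < \<infinity> \<longrightarrow>
            limsup (\<lambda>L::nat. ereal (lim (\<lambda>n.
               \<P>(\<omega> in M. X 1 \<omega> = 1 \<bar> (\<Sum>i=1..n. X i \<omega>) \<le> L)))) > 0)"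
proof -
  \<comment> \<open>Measurability of the \<open>X n\<close> is part of \<open>indep_vars\<close>.\<close>
  interpret prob_space M
    by (rule assms(1))
  interpret half_weight_process M a X
    by unfold_locales (use assms(2-4,6-8) in simp_all)
  show ?thesis
    unfolding lim_cond_prob_first_given_sum_le
    using liminf_ratio_with_one_eq_0 limsup_ratio_with_one_pos by auto
qed

end
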